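(* Let $\mathcal{P}$ be a polyomino and $I_{\mathcal{P}}\subset S=\mathbb{K}[x_v\mid v\in V(\mathcal{P})]$ its polyomino ideal over a field $\mathbb{K}$. If there exists a zig-zag walk in $\mathcal{P}$, then $I_{\mathcal{P}}$ is not prime.
   Context: For $a\in\mathbb{N}^2$ the cell $[a,a+(1,1)]$ has vertices $a,a+(1,0),a+(0,1),a+(1,1)$ and four edges. A polyomino $\mathcal{P}$ is a finite nonempty set of cells such that any two cells are joined by a sequence of cells of $\mathcal{P}$, consecutive ones sharing an edge. $V(\mathcal{P})$ is the union of the vertex sets of its cells. For $a=(i,j)$, $b=(k,\ell)$ with $i<k$, $j<\ell$, the interval $[a,b]$ has diagonal corners $a,b$ and anti-diagonal corners $(i,\ell),(k,j)$; it is an inner interval of $\mathcal{P}$ if all its cells belong to $\mathcal{P}$. $I_{\mathcal{P}}$ is generated by the binomials $x_ax_b-x_cx_d$ for inner intervals $[a,b]$ with anti-diagonal corners $c,d$. A horizontal (resp. vertical) edge interval of $\mathcal{P}$ is a set of lattice points on a horizontal (resp. vertical) line, consecutive in that line, such that each pair of consecutive points forms an edge of some cell of $\mathcal{P}$. A zig-zag walk of $\mathcal{P}$ is a sequence of distinct inner intervals $I_1,\dots,I_\ell$ of $\mathcal{P}$ such that, for each $i$, $v_i,z_i$ are the diagonal (resp. anti-diagonal) corners and $u_i,v_{i+1}$ the anti-diagonal (resp. diagonal) corners of $I_i$, and: (Z1) $I_1\cap I_\ell=\{v_1\}=\{v_{\ell+1}\}$ and $I_i\cap I_{i+1}=\{v_{i+1}\}$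 for $i=1,\dots,\ell-1$; (Z2) $v_i$ and $v_{i+1}$ lie on a common edge interval of $\mathcal{P}$ for $i=1,\dots,\ell$; (Z3) for $i\ne j$ there is no inner interval of $\mathcal{P}$ containing both $z_i$ and $z_j$. *)

theory Defs
  imports "HOL-Library.Poly_Mapping" "HOL-Algebra.Ideal"
begin

type_synonym point = "nat \<times> nat"

text \<open>A cell is identified with its lower-left corner a; the cell is [a, a+(1,1)].\<close>

definition cell_vertices :: "point \<Rightarrow> point set" where
  "cell_vertices a = {a, (fst a + 1, snd a), (fst a, snd a + 1), (fst a + 1, snd a + 1)}"

definition cell_edges :: "point \<Rightarrow> point set set" where
  "cell_edges a = {{a, (fst a + 1, snd a)}, {a, (fst a, snd a + 1)},
                   {(fst a + 1, snd a), (fst a + 1, snd a + 1)},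
                   {(fst a, snd a + 1), (fst a + 1, snd a + 1)}}"

definition share_edge :: "point \<Rightarrow> point \<Rightarrow> bool" where
  "share_edge c d \<longleftrightarrow> cell_edges c \<inter> cell_edges d \<noteq> {}"

definition polyomino :: "point set \<Rightarrow> bool" where
  "polyomino P \<longleftrightarrow> finite P \<and> P \<noteq> {} \<and>
     (\<forall>c\<in>P. \<forall>d\<in>P. (c, d) \<in> {(x, y). x \<in> P \<and> y \<in> P \<and> share_edge x y}\<^sup>*)"

definition vertices :: "point set \<Rightarrow> point set" where
  "vertices P = (\<Union>c\<in>P. cell_vertices c)"

definition is_interval :: "point \<Rightarrow> point \<Rightarrow> bool" where
  "is_interval a b \<longleftrightarrow> fst a < fst b \<and> snd a < snd b"

definition interval_cells :: "point \<Rightarrow> point \<Rightarrow> point set" where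
  "interval_cells a b = {c. fst a \<le> fst c \<and> fst c < fst b \<and> snd a \<le> snd c \<and> snd c < snd b}"

definition interval_points :: "point \<Rightarrow> point \<Rightarrow> point set" where
  "interval_points a b = {p. fst a \<le> fst p \<and> fst p \<le> fst b \<and> snd a \<le> snd p \<and> snd p \<le> snd b}"

definition inner_interval :: "point set \<Rightarrow> point \<Rightarrow> point \<Rightarrow> bool" where
  "inner_interval P a b \<longleftrightarrow> is_interval a b \<and> interval_cells a b \<subseteq> P"

definition anti_diag :: "point \<Rightarrow> point \<Rightarrow> point set" where
  "anti_diag a b = {(fst a, snd b), (fst b, snd a)}"

type_synonym 'k mpoly = "(point \<Rightarrow>\<^sub>0 nat) \<Rightarrow>\<^sub>0 'k"

definition var :: "point \<Rightarrow> 'k::comm_ring_1 mpoly" where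
  "var v = Poly_Mapping.single (Poly_Mapping.single v 1) 1"

text \<open>S = K[x_v | v \<in> V]: polynomials all of whose monomials only involve variables in V.\<close>

definition poly_ring :: "point set \<Rightarrow> ('k::comm_ring_1 mpoly) ring" where
  "poly_ring V = \<lparr>carrier = {p :: 'k mpoly. \<forall>m\<in>Poly_Mapping.keys p. Poly_Mapping.keys m \<subseteq> V},
                  monoid.mult = (*), one = 1, zero = 0, add = (+)\<rparr>"

definition polyomino_ideal :: "point set \<Rightarrow> ('k::comm_ring_1 mpoly) set" where
  "polyomino_ideal P = genideal (poly_ring (vertices P))
     {var a * var b - var (fst a, snd b) * var (fst b, snd a) | a b. inner_interval P a b}"

definition is_edge_of :: "point set \<Rightarrow> point \<Rightarrow> point \<Rightarrow> bool" where
  "is_edge_of P p q \<longleftrightarrow> (\<exists>c\<in>P. {p, q} \<in> cell_edges c)"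

definition horiz_edge_interval :: "point set \<Rightarrow> point set \<Rightarrow> bool" where
  "horiz_edge_interval P E \<longleftrightarrow> (\<exists>i k j. i \<le> k \<and> E = {(x, j) | x. i \<le> x \<and> x \<le> k} \<and>
      (\<forall>x. i \<le> x \<and> x < k \<longrightarrow> is_edge_of P (x, j) (x + 1, j)))"

definition vert_edge_interval :: "point set \<Rightarrow> point set \<Rightarrow> bool" where
  "vert_edge_interval P E \<longleftrightarrow> (\<exists>i k j. i \<le> k \<and> E = {(j, y) | y. i \<le> y \<and> y \<le> k} \<and>
      (\<forall>y. i \<le> y \<and> y < k \<longrightarrow> is_edge_of P (j, y) (j, y + 1)))"

definition edge_interval :: "point set \<Rightarrow> point set \<Rightarrow> bool" where
  "edge_interval P E \<longleftrightarrow> horiz_edge_interval P E \<or> vert_edge_interval P E"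

text \<open>Zig-zag walk I_1..I_l, 0-indexed: interval I_i = [a i, b i] for i < l,
  with points v i, z i, u i (i < l) and v l = v 0 (i.e. v_{l+1} = v_1).\<close>

definition zigzag_walk :: "point set \<Rightarrow> nat \<Rightarrow> (nat \<Rightarrow> point) \<Rightarrow> (nat \<Rightarrow> point) \<Rightarrow>
    (nat \<Rightarrow> point) \<Rightarrow> (nat \<Rightarrow> point) \<Rightarrow> (nat \<Rightarrow> point) \<Rightarrow> bool" where
  "zigzag_walk P l a b v z u \<longleftrightarrow>
     l \<ge> 1 \<and>
     inj_on (\<lambda>i. (a i, b i)) {..<l} \<and>
     (\<forall>i<l. inner_interval P (a i) (b i)) \<and>
     (\<forall>i<l. ({v i, z i} = {a i, b i} \<and> {u i, v (i + 1)} = anti_diag (a i) (b i)) \<or>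
            ({v i, z i} = anti_diag (a i) (b i) \<and> {u i, v (i + 1)} = {a i, b i})) \<and>
     v l = v 0 \<and>
     interval_points (a 0) (b 0) \<inter> interval_points (a (l - 1)) (b (l - 1)) = {v 0} \<and>
     (\<forall>i. i + 1 < l \<longrightarrow> interval_points (a i) (b i) \<inter> interval_points (a (i + 1)) (b (i + 1)) = {v (i + 1)}) \<and>
     (\<forall>i<l. \<exists>E. edge_interval P E \<and> v i \<in> E \<and> v (i + 1) \<in> E) \<and>
     (\<forall>i<l. \<forall>j<l. i \<noteq> j \<longrightarrow>
        \<not> (\<exists>c d. inner_interval P c d \<and> z i \<in> interval_points c d \<and> z j \<in> interval_points c d))"

end

theory Submission
  imports Defs
begin

text \<open>Write x_V, x_Z, x_U for the products of the variables x_{v_i}, x_{z_i}, x_{u_i} along the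
  walk. Multiplying the binomials x_{v_i} x_{z_i} - x_{u_i} x_{v_{i+1}} of the intervals I_i,
  which lie in I_P, gives x_V x_Z - x_U x_V \<in> I_P, since the walk is closed. If I_P were prime,
  then x_V \<in> I_P or x_Z - x_U \<in> I_P. Neither holds: an element of I_P has zero coefficient at
  every monomial whose support meets each inner interval in at most one point, which applies
  to a single variable and, by (Z3), to x_Z; and x_Z \<noteq> x_U because u_1 is none of the z_j.\<close>

lemma prod_lessThan_shift_cyclic:
  fixes f :: "nat \<Rightarrow> 'a::comm_monoid_mult"
  assumes "f n = f 0"
  shows "(\<Prod>i<n. f (Suc i)) = (\<Prod>i<n. f i)"
proof (cases n)
  case (Suc k)
  have "(\<Prod>i<Suc k. f (Suc i)) = (\<Prod>i<k. f (Suc i)) * f (Suc k)"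
    by (rule prod.lessThan_Suc)
  also have "\<dots> = f 0 * (\<Prod>i<k. f (Suc i))"
    using assms Suc by (simp add: mult.commute)
  also have "\<dots> = (\<Prod>i<Suc k. f i)"
    by (rule prod.lessThan_Suc_shift[symmetric])
  finally show ?thesis
    using Suc by simp
qed simp

lemma poly_ring_ops [simp]:
  "monoid.mult (poly_ring V) = (*)" "one (poly_ring V) = 1"
  "zero (poly_ring V) = 0" "add (poly_ring V) = (+)"
  by (simp_all add: poly_ring_def)

lemma mem_poly_ring_iff:
  "p \<in> carrier (poly_ring V) \<longleftrightarrow> (\<forall>m\<in>Poly_Mapping.keys p. Poly_Mapping.keys m \<subseteq> V)"
  by (simp add: poly_ring_def)

lemma keys_add_nat:
  "Poly_Mapping.keys (m + n :: 'a \<Rightarrow>\<^sub>0 nat) = Poly_Mapping.keys m \<union> Poly_Mapping.keys n"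
  by (auto simp: in_keys_iff lookup_add)

lemma poly_ring_closed:
  fixes p q :: "'k::comm_ring_1 mpoly"
  assumes "p \<in> carrier (poly_ring V)" and "q \<in> carrier (poly_ring V)"
  shows "p + q \<in> carrier (poly_ring V)" and "p * q \<in> carrier (poly_ring V)"
    and "- p \<in> carrier (poly_ring V)" and "p - q \<in> carrier (poly_ring V)"
proof -
  show "p + q \<in> carrier (poly_ring V)" "p - q \<in> carrier (poly_ring V)"
    using assms keys_add[of p q] keys_diff[of p q] unfolding mem_poly_ring_iff by blast+
  show "- p \<in> carrier (poly_ring V)"
    using assms(1) by (simp add: mem_poly_ring_iff)
  show "p * q \<in> carrier (poly_ring V)"
    using assms keys_mult[of p q] unfolding mem_poly_ring_iff by (fastforce simp: keys_add_nat)
qed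

lemma cring_poly_ring: "cring (poly_ring V :: 'k::comm_ring_1 mpoly ring)"
proof -
  have "0 \<in> carrier (poly_ring V :: 'k mpoly ring)" "1 \<in> carrier (poly_ring V :: 'k mpoly ring)"
    by (simp_all add: mem_poly_ring_iff)
  then show ?thesis
    by (intro cringI abelian_groupI comm_monoidI)
      (auto simp: poly_ring_closed algebra_simps intro!: bexI[OF _ poly_ring_closed(3)])
qed

lemma a_inv_poly_ring [simp]:
  assumes "p \<in> carrier (poly_ring V)"
  shows "\<ominus>\<^bsub>poly_ring V\<^esub> p = - (p :: 'k::comm_ring_1 mpoly)"
proof -
  interpret cring "poly_ring V :: 'k mpoly ring" by (rule cring_poly_ring)
  show ?thesis
    using assms by (intro minus_equality) (auto simp: mem_poly_ring_iff)
qed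

lemma var_in_poly_ring: "w \<in> V \<Longrightarrow> (var w :: 'k::comm_ring_1 mpoly) \<in> carrier (poly_ring V)"
  by (simp add: var_def mem_poly_ring_iff)

lemma prod_in_poly_ring:
  assumes "\<And>i. i \<in> A \<Longrightarrow> f i \<in> carrier (poly_ring V)"
  shows "(\<Prod>i\<in>A. f i :: 'k::comm_ring_1 mpoly) \<in> carrier (poly_ring V)"
proof -
  interpret cring "poly_ring V :: 'k mpoly ring" by (rule cring_poly_ring)
  show ?thesis
    using assms by (induction A rule: infinite_finite_induct) (use one_closed m_closed in auto)
qed

lemma ideal_poly_ring_closed:
  assumes "ideal I (poly_ring V :: 'k::comm_ring_1 mpoly ring)"
  shows "0 \<in> I" and "\<And>p q. p \<in> I \<Longrightarrow> q \<in> I \<Longrightarrow> p + q \<in> I"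
    and "\<And>p. p \<in> I \<Longrightarrow> - p \<in> I"
    and "\<And>p q. p \<in> carrier (poly_ring V) \<Longrightarrow> q \<in> I \<Longrightarrow> p * q \<in> I"
proof -
  interpret ideal I "poly_ring V :: 'k mpoly ring" by (rule assms)
  show "0 \<in> I" and "\<And>p q. p \<in> I \<Longrightarrow> q \<in> I \<Longrightarrow> p + q \<in> I"
    and "\<And>p q. p \<in> carrier (poly_ring V) \<Longrightarrow> q \<in> I \<Longrightarrow> p * q \<in> I"
    using additive_subgroup.zero_closed[OF is_additive_subgroup]
      additive_subgroup.a_closed[OF is_additive_subgroup] I_l_closed by auto
  show "- p \<in> I" if "p \<in> I" for p
    using additive_subgroup.a_inv_closed[OF is_additive_subgroup that] Icarr[OF that] by simp
qed

lemma ideal_poly_ring_prod_diff: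
  fixes f g :: "nat \<Rightarrow> 'k::comm_ring_1 mpoly"
  assumes I: "ideal I (poly_ring V)"
    and f: "\<And>i. i < n \<Longrightarrow> f i \<in> carrier (poly_ring V)"
    and g: "\<And>i. i < n \<Longrightarrow> g i \<in> carrier (poly_ring V)"
    and fg: "\<And>i. i < n \<Longrightarrow> f i - g i \<in> I"
  shows "(\<Prod>i<n. f i) - (\<Prod>i<n. g i) \<in> I"
  using f g fg
proof (induction n)
  case 0
  show ?case using ideal_poly_ring_closed(1)[OF I] by simp
next
  case (Suc n)
  have "(\<Prod>i<Suc n. f i) - (\<Prod>i<Suc n. g i)
      = f n * ((\<Prod>i<n. f i) - (\<Prod>i<n. g i)) + (\<Prod>i<n. g i) * (f n - g n)"
    by (simp add: algebra_simps)
  moreover have "(\<Prod>i<n. g i) \<in> carrier (poly_ring V)"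
    using Suc.prems by (intro prod_in_poly_ring) auto
  ultimately show ?case
    using Suc by (simp add: ideal_poly_ring_closed[OF I])
qed

lemma primeideal_poly_ring_prod_notin:
  fixes f :: "nat \<Rightarrow> 'k::comm_ring_1 mpoly"
  assumes I: "primeideal I (poly_ring V)"
    and f: "\<And>i. i < n \<Longrightarrow> f i \<in> carrier (poly_ring V)"
    and notin: "\<And>i. i < n \<Longrightarrow> f i \<notin> I"
  shows "(\<Prod>i<n. f i) \<notin> I"
  using f notin
proof (induction n)
  case 0
  interpret primeideal I "poly_ring V :: 'k mpoly ring" by (rule I)
  show ?case using I_notcarr one_imp_carrier by auto
next
  case (Suc n)
  interpret primeideal I "poly_ring V :: 'k mpoly ring" by (rule I)
  have "(\<Prod>i<n. f i) \<in> carrier (poly_ring V)"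
    using Suc.prems by (intro prod_in_poly_ring) auto
  then show ?case
    using Suc I_prime[of "\<Prod>i<n. f i" "f n"] by auto
qed

text \<open>The polynomials whose coefficients vanish at all divisors of m0 form an ideal: every
  monomial of q * p is a multiple of a monomial of p.\<close>

lemma lookup_genideal_poly_ring_eq_0:
  fixes m0 :: "point \<Rightarrow>\<^sub>0 nat" and G :: "'k::comm_ring_1 mpoly set"
  assumes G: "G \<subseteq> carrier (poly_ring V)"
    and vanish: "\<And>g m t. g \<in> G \<Longrightarrow> m0 = m + t \<Longrightarrow> Poly_Mapping.lookup g m = 0"
    and f: "f \<in> genideal (poly_ring V) G"
  shows "Poly_Mapping.lookup f m0 = 0"
proof -
  let ?R = "poly_ring V :: 'k mpoly ring"
  interpret cring ?R by (rule cring_poly_ring)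
  define J where "J = {p \<in> carrier ?R. \<forall>m t. m0 = m + t \<longrightarrow> Poly_Mapping.lookup p m = 0}"
  have mult_closed: "q * p \<in> J" if "p \<in> J" "q \<in> carrier ?R" for p q
  proof -
    have "Poly_Mapping.lookup (q * p) m = 0" if "m0 = m + t" for m t
    proof -
      have "(Poly_Mapping.lookup p m' when m = m'' + m') = 0" for m'' m'
      proof (cases "m = m'' + m'")
        case True
        then have "m0 = m' + (m'' + t)"
          using \<open>m0 = m + t\<close> by (simp add: add_ac)
        then show ?thesis
          using \<open>p \<in> J\<close> by (simp add: J_def)
      qed simp
      then show ?thesis
        by (simp add: lookup_mult)
    qed
    then show ?thesis
      using that m_closed[of q p] by (auto simp: J_def)
  qed
  have "ideal J ?R"
  proof (rule idealI)
    show "subgroup J (add_monoid ?R)"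
    proof (rule add.subgroupI)
      show "J \<subseteq> carrier ?R" "J \<noteq> {}"
        by (auto simp: J_def mem_poly_ring_iff intro!: exI[of _ 0])
      show "\<ominus>\<^bsub>?R\<^esub> p \<in> J" if "p \<in> J" for p
        using mult_closed[OF that, of "- 1"] that by (simp add: J_def mem_poly_ring_iff)
      show "p \<oplus>\<^bsub>?R\<^esub> q \<in> J" if "p \<in> J" "q \<in> J" for p q
        using that a_closed[of p q] by (auto simp: J_def lookup_add)
    qed
  qed (use mult_closed ring_axioms in \<open>auto simp: mult.commute\<close>)
  moreover have "G \<subseteq> J"
    using G vanish by (auto simp: J_def)
  ultimately have "genideal ?R G \<subseteq> J"
    by (rule genideal_minimal)
  then show ?thesis
    using f by (auto simp: J_def)
qed

lemma interval_points_subset_vertices: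
  assumes "inner_interval P a b"
  shows "interval_points a b \<subseteq> vertices P"
proof
  fix p assume p: "p \<in> interval_points a b"
  define c where
    "c = (if fst p < fst b then fst p else fst p - 1, if snd p < snd b then snd p else snd p - 1)"
  have "c \<in> interval_cells a b"
    using assms p
    by (auto simp: c_def interval_cells_def interval_points_def inner_interval_def is_interval_def)
  moreover have "p \<in> cell_vertices c"
    using p by (cases p) (auto simp: c_def interval_points_def cell_vertices_def)
  ultimately show "p \<in> vertices P"
    using assms by (auto simp: vertices_def inner_interval_def)
qed

lemma corners_in_interval_points:
  assumes "is_interval a b"
  shows "a \<in> interval_points a b" "b \<in> interval_points a b"
    "(fst a, snd b) \<in> interval_points a b" "(fst b, snd a) \<in> interval_points a b"
  using assms by (simp_all add: interval_points_def is_interval_def less_imp_le)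

lemma var_mult_var:
  "(var p * var q :: 'k::comm_ring_1 mpoly)
    = Poly_Mapping.single (Poly_Mapping.single p 1 + Poly_Mapping.single q 1) 1"
  by (simp add: var_def mult_single)

lemma prod_var:
  "(\<Prod>i\<in>A. var (f i) :: 'k::comm_ring_1 mpoly)
    = Poly_Mapping.single (\<Sum>i\<in>A. Poly_Mapping.single (f i) 1) 1"
  by (induction A rule: infinite_finite_induct) (simp_all add: var_def mult_single)

lemma keys_sum_single:
  assumes "finite A"
  shows "Poly_Mapping.keys (\<Sum>i\<in>A. Poly_Mapping.single (f i) (1::nat)) = f ` A"
  using assms by (induction A rule: finite_induct) (simp_all add: keys_add_nat)

lemma binomial_in_poly_ring:
  assumes "inner_interval P a b"
  shows "(var a * var b - var (fst a, snd b) * var (fst b, snd a) :: 'k::comm_ring_1 mpoly)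
    \<in> carrier (poly_ring (vertices P))"
proof -
  have "is_interval a b"
    using assms by (simp add: inner_interval_def)
  have "var p \<in> carrier (poly_ring (vertices P) :: 'k mpoly ring)"
    if "p \<in> {a, b, (fst a, snd b), (fst b, snd a)}" for p
    using that corners_in_interval_points[OF \<open>is_interval a b\<close>]
      interval_points_subset_vertices[OF assms]
    by (intro var_in_poly_ring) auto
  then show ?thesis
    by (simp add: poly_ring_closed)
qed

lemma ideal_polyomino_ideal:
  "ideal (polyomino_ideal P :: 'k::comm_ring_1 mpoly set) (poly_ring (vertices P))"
proof -
  interpret cring "poly_ring (vertices P) :: 'k mpoly ring" by (rule cring_poly_ring)
  show ?thesis
    unfolding polyomino_ideal_def using binomial_in_poly_ring by (intro genideal_ideal) blast
qed

lemma binomial_in_polyomino_ideal: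
  "inner_interval P a b \<Longrightarrow>
    (var a * var b - var (fst a, snd b) * var (fst b, snd a) :: 'k::comm_ring_1 mpoly) \<in> polyomino_ideal P"
  unfolding polyomino_ideal_def genideal_def by blast

text \<open>Both terms of a generator x_a x_b - x_c x_d involve two distinct points of the inner
  interval [a, b], so neither divides a monomial whose support meets every inner interval at
  most once.\<close>

lemma lookup_polyomino_ideal_eq_0:
  fixes m0 :: "point \<Rightarrow>\<^sub>0 nat"
  assumes sparse: "\<And>c d p q. inner_interval P c d \<Longrightarrow>
      p \<in> interval_points c d \<Longrightarrow> q \<in> interval_points c d \<Longrightarrow>
      p \<in> Poly_Mapping.keys m0 \<Longrightarrow> q \<in> Poly_Mapping.keys m0 \<Longrightarrow> p = q"
    and f: "(f :: 'k::comm_ring_1 mpoly) \<in> polyomino_ideal P"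
  shows "Poly_Mapping.lookup f m0 = 0"
  using f unfolding polyomino_ideal_def
proof (rule lookup_genideal_poly_ring_eq_0[rotated 2])
  show "{var a * var b - var (fst a, snd b) * var (fst b, snd a) | a b. inner_interval P a b}
      \<subseteq> carrier (poly_ring (vertices P) :: 'k mpoly ring)"
    using binomial_in_poly_ring by blast
  have not_divides: "m0 \<noteq> Poly_Mapping.single p 1 + Poly_Mapping.single q 1 + t"
    if "inner_interval P c d" "p \<in> interval_points c d" "q \<in> interval_points c d" "p \<noteq> q"
    for c d p q t
    using sparse[OF that(1-3)] that(4) by (auto simp: keys_add_nat)
  fix g m t
  assume "g \<in> {var a * var b - var (fst a, snd b) * var (fst b, snd a) | a b. inner_interval P a b}"
    and m0: "m0 = m + t"
  then obtain a b where ab: "inner_interval P a b"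
    and g: "g = var a * var b - var (fst a, snd b) * var (fst b, snd a)" by blast
  have "is_interval a b"
    using ab by (simp add: inner_interval_def)
  then have "a \<noteq> b" "(fst a, snd b) \<noteq> (fst b, snd a)"
    by (auto simp: is_interval_def)
  then have "m \<noteq> Poly_Mapping.single a 1 + Poly_Mapping.single b 1"
    and "m \<noteq> Poly_Mapping.single (fst a, snd b) 1 + Poly_Mapping.single (fst b, snd a) 1"
    using not_divides[OF ab] corners_in_interval_points[OF \<open>is_interval a b\<close>] m0 by blast+
  then show "Poly_Mapping.lookup g m = 0"
    by (simp add: g var_mult_var lookup_minus lookup_single)
qed

lemma var_notin_polyomino_ideal: "(var w :: 'k::comm_ring_1 mpoly) \<notin> polyomino_ideal P"
proof
  assume "(var w :: 'k mpoly) \<in> polyomino_ideal P"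
  then have "Poly_Mapping.lookup (var w :: 'k mpoly) (Poly_Mapping.single w 1) = 0"
    by (rule lookup_polyomino_ideal_eq_0[rotated]) auto
  then show False
    by (simp add: var_def)
qed

lemma var_mult_var_doubleton:
  "{p, q} = {p', q'} \<Longrightarrow> (var p * var q :: 'k::comm_ring_1 mpoly) = var p' * var q'"
  by (auto simp: doubleton_eq_iff mult.commute)

lemma corner_pairs_in_interval_points:
  assumes "is_interval a b"
    and "({p, q} = {a, b} \<and> {r, s} = anti_diag a b) \<or> ({p, q} = anti_diag a b \<and> {r, s} = {a, b})"
  shows "{p, q, r, s} \<subseteq> interval_points a b" and "q \<noteq> r"
proof -
  have "{a, b} \<inter> anti_diag a b = {}"
    using assms(1) by (auto simp: anti_diag_def is_interval_def prod_eq_iff)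
  then show "q \<noteq> r"
    using assms(2) by blast
  have "{p, q, r, s} \<subseteq> {a, b} \<union> anti_diag a b"
    using assms(2) by blast
  moreover have "{a, b} \<union> anti_diag a b \<subseteq> interval_points a b"
    using corners_in_interval_points[OF assms(1)] by (simp add: anti_diag_def)
  ultimately show "{p, q, r, s} \<subseteq> interval_points a b"
    by (rule subset_trans)
qed

lemma corner_pairs_binomial_in_polyomino_ideal:
  assumes ab: "inner_interval P a b"
    and "({p, q} = {a, b} \<and> {r, s} = anti_diag a b) \<or> ({p, q} = anti_diag a b \<and> {r, s} = {a, b})"
  shows "(var p * var q - var r * var s :: 'k::comm_ring_1 mpoly) \<in> polyomino_ideal P"
  using assms(2)
proof
  assume "{p, q} = {a, b} \<and> {r, s} = anti_diag a b"
  then show ?thesis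
    using binomial_in_polyomino_ideal[OF ab]
    by (simp add: anti_diag_def var_mult_var_doubleton[of p q] var_mult_var_doubleton[of r s])
next
  assume "{p, q} = anti_diag a b \<and> {r, s} = {a, b}"
  then have "var p * var q - var r * var s
      = - (var a * var b - var (fst a, snd b) * var (fst b, snd a) :: 'k mpoly)"
    by (simp add: anti_diag_def var_mult_var_doubleton[of p q] var_mult_var_doubleton[of r s])
  then show ?thesis
    using ideal_poly_ring_closed(3)[OF ideal_polyomino_ideal binomial_in_polyomino_ideal[OF ab]]
    by simp
qed

lemma zigzag_walk_corner_pairs:
  assumes "zigzag_walk P l a b v z u" and "i < l"
  shows "inner_interval P (a i) (b i)"
    and "({v i, z i} = {a i, b i} \<and> {u i, v (Suc i)} = anti_diag (a i) (b i)) \<or>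
      ({v i, z i} = anti_diag (a i) (b i) \<and> {u i, v (Suc i)} = {a i, b i})"
  using assms by (simp_all add: zigzag_walk_def)

lemma zigzag_walk_vertices:
  assumes "zigzag_walk P l a b v z u" and "i < l"
  shows "{v i, z i, u i, v (Suc i)} \<subseteq> vertices P"
proof -
  note ab = zigzag_walk_corner_pairs[OF assms]
  then have "is_interval (a i) (b i)"
    by (simp add: inner_interval_def)
  then show ?thesis
    using corner_pairs_in_interval_points(1)[OF _ ab(2)] interval_points_subset_vertices[OF ab(1)]
    by blast
qed

lemma zigzag_walk_binomial_in_polyomino_ideal:
  assumes "zigzag_walk P l a b v z u" and "i < l"
  shows "(var (v i) * var (z i) - var (u i) * var (v (Suc i)) :: 'k::comm_ring_1 mpoly)
    \<in> polyomino_ideal P"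
  using zigzag_walk_corner_pairs[OF assms] by (rule corner_pairs_binomial_in_polyomino_ideal)

lemma zigzag_walk_z_separated:
  assumes "zigzag_walk P l a b v z u" and "i < l" "j < l"
    and "inner_interval P c d" "z i \<in> interval_points c d" "z j \<in> interval_points c d"
  shows "i = j"
  using assms unfolding zigzag_walk_def by blast

lemma zigzag_walk_u0_ne_z:
  assumes walk: "zigzag_walk P l a b v z u" and "j < l"
  shows "u 0 \<noteq> z j"
proof
  assume u0: "u 0 = z j"
  have "0 < l"
    using \<open>j < l\<close> by simp
  note ab = zigzag_walk_corner_pairs[OF walk \<open>0 < l\<close>]
  then have "is_interval (a 0) (b 0)"
    by (simp add: inner_interval_def)
  note corners = corner_pairs_in_interval_points[OF this ab(2)]
  then have "j = 0"
    using zigzag_walk_z_separated[OF walk \<open>0 < l\<close> \<open>j < l\<close> ab(1)] u0 by auto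
  then show False
    using corners(2) u0 by simp
qed

lemma zigzag_walk_z_u_binomial_notin_polyomino_ideal:
  assumes walk: "zigzag_walk P l a b v z u"
  shows "(\<Prod>i<l. var (z i)) - (\<Prod>i<l. var (u i))
    \<notin> (polyomino_ideal P :: 'k::comm_ring_1 mpoly set)"
proof
  define mz where "mz = (\<Sum>i<l. Poly_Mapping.single (z i) (1::nat))"
  define mu where "mu = (\<Sum>i<l. Poly_Mapping.single (u i) (1::nat))"
  have keys_mz: "Poly_Mapping.keys mz = z ` {..<l}" and keys_mu: "Poly_Mapping.keys mu = u ` {..<l}"
    unfolding mz_def mu_def by (rule keys_sum_single, simp)+
  assume "(\<Prod>i<l. var (z i)) - (\<Prod>i<l. var (u i)) \<in> (polyomino_ideal P :: 'k mpoly set)"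
  then have "Poly_Mapping.single mz 1 - Poly_Mapping.single mu (1::'k) \<in> polyomino_ideal P"
    by (simp add: prod_var mz_def mu_def)
  then have "Poly_Mapping.lookup (Poly_Mapping.single mz 1 - Poly_Mapping.single mu (1::'k)) mz = 0"
  proof (rule lookup_polyomino_ideal_eq_0[rotated])
    fix c d p q
    assume cd: "inner_interval P c d"
      and "p \<in> interval_points c d" "q \<in> interval_points c d"
      and "p \<in> Poly_Mapping.keys mz" "q \<in> Poly_Mapping.keys mz"
    then show "p = q"
      using zigzag_walk_z_separated[OF walk _ _ cd] by (auto simp: keys_mz)
  qed
  moreover have "u 0 \<in> Poly_Mapping.keys mu" "u 0 \<notin> Poly_Mapping.keys mz"
    using zigzag_walk_u0_ne_z[OF walk] walk
    by (auto simp: keys_mu keys_mz zigzag_walk_def)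
  then have "mu \<noteq> mz"
    by blast
  ultimately show False
    by (simp add: lookup_minus lookup_single)
qed

theorem corollary3p6:
  fixes P :: "point set" and l :: nat and a b v z u :: "nat \<Rightarrow> point"
  assumes "polyomino P"
    and "zigzag_walk P l a b v z u"
  shows "\<not> primeideal (polyomino_ideal P :: ('k::field) mpoly set) (poly_ring (vertices P))"
proof
  let ?R = "poly_ring (vertices P) :: 'k mpoly ring"
  let ?I = "polyomino_ideal P :: 'k mpoly set"
  let ?V = "\<Prod>i<l. var (v i) :: 'k mpoly"
  let ?ZU = "(\<Prod>i<l. var (z i)) - (\<Prod>i<l. var (u i)) :: 'k mpoly"
  note walk = \<open>zigzag_walk P l a b v z u\<close>
  assume prime: "primeideal ?I ?R"
  have in_R: "var (v i) \<in> carrier ?R" "var (z i) \<in> carrier ?R"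
    "var (u i) \<in> carrier ?R" "var (v (Suc i)) \<in> carrier ?R" if "i < l" for i
    using zigzag_walk_vertices[OF walk that] by (auto intro: var_in_poly_ring)
  have "(\<Prod>i<l. var (v i) * var (z i)) - (\<Prod>i<l. var (u i) * var (v (Suc i))) \<in> ?I"
    using in_R zigzag_walk_binomial_in_polyomino_ideal[OF walk]
    by (intro ideal_poly_ring_prod_diff[OF ideal_polyomino_ideal]) (auto simp: poly_ring_closed)
  moreover have "(\<Prod>i<l. var (v (Suc i))) = ?V"
    using walk by (intro prod_lessThan_shift_cyclic) (simp add: zigzag_walk_def)
  then have "(\<Prod>i<l. var (v i) * var (z i)) - (\<Prod>i<l. var (u i) * var (v (Suc i))) = ?V * ?ZU"
    unfolding prod.distrib by (simp add: algebra_simps)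
  moreover have "?V \<in> carrier ?R" "?ZU \<in> carrier ?R"
    using in_R by (auto intro!: prod_in_poly_ring poly_ring_closed)
  ultimately have "?V \<in> ?I \<or> ?ZU \<in> ?I"
    using primeideal.I_prime[OF prime] by simp
  moreover have "?V \<notin> ?I"
    using in_R by (intro primeideal_poly_ring_prod_notin[OF prime] var_notin_polyomino_ideal)
  ultimately show False
    using zigzag_walk_z_u_binomial_notin_polyomino_ideal[OF walk] by blast
qed

end
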